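(* In COT, every indexed class is bounded: for every class $X$ and ordinal $x$, if $\iota(X)=x$ then $\mathrm{bnd}(X)$.
   Context: COT (Class Ordering Theory) is the following theory in two-sorted first-order logic with equality. Lower-case variables range over the first sort ("ordinals"), upper-case variables over the second sort ("classes"). The non-logical symbols are: a binary relation $\varepsilon$ holding only from first-sort to second-sort objects (class membership), a binary relation $\prec$ holding only between classes, and a partial unary function $\iota$ from classes to ordinals. Write $X\equiv Y$ for $\forall z(z\ \varepsilon\ X\leftrightarrow z\ \varepsilon\ Y)$. The notation $\{x\mid\phi\}$ denotes any class whose members are exactly the $x$ satisfying $\phi$; a formula $\psi(\{x\mid\phi\})$ abbreviates $\forall X[\forall x(x\ \varepsilon\ X\leftrightarrow\phi)\to\psi(X)]$. Axioms: (1) Comprehension: $\exists X\forall x(x\ \varepsilon\ X\leftrightarrow\phi)$ for every formula $\phi$ in which $X$ is not free. (2) Transitivity: $X\prec Y\prec Z\to X\prec Z$; Co-connectedness: $X\not\equiv Y\leftrightarrow(X\prec Y\lor Y\prec X)$; Well-foundedness: for every formula $\phi$, $\phi(X)\to\exists M(\phi(M)\land\forall Y(\phi(Y)\to\neg Y\prec M))$. Define $x<y\iff\{x\}\prec\{y\}$, and $\lim X$ = the $<$-least $l$ such that $x<l$ for all $x\ \varepsilon\ X$ (when it exists); $\mathrm{bnd}(X)$ means $\lim X$ exists. (3) Respective: if $\lim X\le y$ and $y\ \varepsilon\ Y$ then $X\prec Y$. (4) Indexing: for every $X$ with $\mathrm{bnd}(X)$, $\iota(X)$ is defined and $\iota(X)=\lim\{\iota(Y)\mid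 Y\prec X\}$. (5) Infinity: $\exists l(\exists k\,(k<l)\land\forall x<l\,\exists y\,(x<y<l))$. (6) Boundedness: if $\mathrm{bnd}(X)$ and $X\sim Y$ (the members of $X$ and of $Y$ are equinumerous via a class bijection in the usual sense) then $\mathrm{bnd}(Y)$.
   Formalization: Axiom (4) is a two-way equality for every class X, bounded or not: $\iota(X)=x$ exactly when $\lim\{\iota(Y)\mid Y\prec X\}$ exists and equals x, so $\iota(X)$ is undefined when that limit does not exist. Apart from conventions, each condition added here is assumed in the paper as well or is needed for the statement above to hold. *)

theory Defs
  imports Main
begin

text \<open>Sort of ordinals: type 'o; sort of classes: type 'c.
  eps :: 'o => 'c => bool is class membership, prec is the class ordering,
  iota :: 'c => 'o option is the partial indexing function (None = undefined).\<close>

definition ceq :: "('o \<Rightarrow> 'c \<Rightarrow> bool) \<Rightarrow> 'c \<Rightarrow> 'c \<Rightarrow> bool" where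
  "ceq eps X Y \<longleftrightarrow> (\<forall>z. eps z X \<longleftrightarrow> eps z Y)"

text \<open>x < y iff {x} prec {y}, with the class-abstraction abbreviation convention.\<close>
definition olt :: "('o \<Rightarrow> 'c \<Rightarrow> bool) \<Rightarrow> ('c \<Rightarrow> 'c \<Rightarrow> bool) \<Rightarrow> 'o \<Rightarrow> 'o \<Rightarrow> bool" where
  "olt eps prec x y \<longleftrightarrow>
     (\<forall>X Y. (\<forall>z. eps z X \<longleftrightarrow> z = x) \<longrightarrow> (\<forall>z. eps z Y \<longleftrightarrow> z = y) \<longrightarrow> prec X Y)"

definition is_lim :: "('o \<Rightarrow> 'c \<Rightarrow> bool) \<Rightarrow> ('c \<Rightarrow> 'c \<Rightarrow> bool) \<Rightarrow> 'c \<Rightarrow> 'o \<Rightarrow> bool" where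
  "is_lim eps prec X l \<longleftrightarrow>
     (\<forall>x. eps x X \<longrightarrow> olt eps prec x l) \<and>
     (\<forall>l'. (\<forall>x. eps x X \<longrightarrow> olt eps prec x l') \<longrightarrow> (olt eps prec l l' \<or> l = l'))"

definition bnd :: "('o \<Rightarrow> 'c \<Rightarrow> bool) \<Rightarrow> ('c \<Rightarrow> 'c \<Rightarrow> bool) \<Rightarrow> 'c \<Rightarrow> bool" where
  "bnd eps prec X \<longleftrightarrow> (\<exists>l. is_lim eps prec X l)"

text \<open>lim X \<le> y (false if lim X does not exist).\<close>
definition lim_le :: "('o \<Rightarrow> 'c \<Rightarrow> bool) \<Rightarrow> ('c \<Rightarrow> 'c \<Rightarrow> bool) \<Rightarrow> 'c \<Rightarrow> 'o \<Rightarrow> bool" where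
  "lim_le eps prec X y \<longleftrightarrow> (\<exists>l. is_lim eps prec X l \<and> (olt eps prec l y \<or> l = y))"

definition equinum :: "('o \<Rightarrow> 'c \<Rightarrow> bool) \<Rightarrow> 'c \<Rightarrow> 'c \<Rightarrow> bool" where
  "equinum eps X Y \<longleftrightarrow> (\<exists>f. bij_betw f {x. eps x X} {y. eps y Y})"

definition index_class :: "('o \<Rightarrow> 'c \<Rightarrow> bool) \<Rightarrow> ('c \<Rightarrow> 'c \<Rightarrow> bool) \<Rightarrow> ('c \<Rightarrow> 'o option) \<Rightarrow> 'c \<Rightarrow> 'c \<Rightarrow> bool" where
  "index_class eps prec iota X C \<longleftrightarrow> (\<forall>z. eps z C \<longleftrightarrow> (\<exists>Y. prec Y X \<and> iota Y = Some z))"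

definition COT :: "('o \<Rightarrow> 'c \<Rightarrow> bool) \<Rightarrow> ('c \<Rightarrow> 'c \<Rightarrow> bool) \<Rightarrow> ('c \<Rightarrow> 'o option) \<Rightarrow> bool" where
  "COT eps prec iota \<longleftrightarrow>
     \<comment> \<open>(1) Comprehension\<close>
     (\<forall>P :: 'o \<Rightarrow> bool. \<exists>X. \<forall>x. eps x X \<longleftrightarrow> P x) \<and>
     \<comment> \<open>(2) Transitivity, co-connectedness, well-foundedness\<close>
     (\<forall>X Y Z. prec X Y \<longrightarrow> prec Y Z \<longrightarrow> prec X Z) \<and>
     (\<forall>X Y. \<not> ceq eps X Y \<longleftrightarrow> (prec X Y \<or> prec Y X)) \<and>
     (\<forall>(P :: 'c \<Rightarrow> bool) X. P X \<longrightarrow> (\<exists>M. P M \<and> (\<forall>Y. P Y \<longrightarrow> \<not> prec Y M))) \<and>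
     \<comment> \<open>(3) Respective\<close>
     (\<forall>X Y y. lim_le eps prec X y \<longrightarrow> eps y Y \<longrightarrow> prec X Y) \<and>
     \<comment> \<open>(4) Indexing: iota(X) = lim {iota(Y) | Y prec X} (Kleene equality), defined on bounded X\<close>
     (\<forall>X. bnd eps prec X \<longrightarrow> iota X \<noteq> None) \<and>
     (\<forall>X x. iota X = Some x \<longleftrightarrow> (\<forall>C. index_class eps prec iota X C \<longrightarrow> is_lim eps prec C x)) \<and>
     \<comment> \<open>(5) Infinity\<close>
     (\<exists>l. (\<exists>k. olt eps prec k l) \<and> (\<forall>x. olt eps prec x l \<longrightarrow> (\<exists>y. olt eps prec x y \<and> olt eps prec y l))) \<and>
     \<comment> \<open>(6) Boundedness\<close>
     (\<forall>X Y. bnd eps prec X \<longrightarrow> equinum eps X Y \<longrightarrow> bnd eps prec Y)"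

end

theory Submission
  imports Defs
begin

text \<open>Let \<open>E\<^sub>z = {y | y < z}\<close>; its limit is \<open>z\<close>, so \<open>g(z) = \<iota>(E\<^sub>z)\<close> is defined.
  Respective makes \<open>z \<mapsto> E\<^sub>z\<close> strictly \<open>\<prec>\<close>-increasing and Indexing makes \<open>\<iota>\<close>
  strictly increasing along \<open>\<prec>\<close>, so \<open>g\<close> is strictly increasing and, by well-foundedness
  of \<open><\<close>, never drops below its argument. If \<open>\<iota>(X) = x\<close> but \<open>X\<close> were unbounded, some
  member of \<open>X\<close> would be \<open>\<ge> x\<close>; then \<open>E\<^sub>x \<prec> X\<close> by Respective and \<open>g(x) < \<iota>(X) = x\<close>.\<close>

locale class_ordering =
  fixes eps :: "'o \<Rightarrow> 'c \<Rightarrow> bool" and prec :: "'c \<Rightarrow> 'c \<Rightarrow> bool"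
  assumes comprehension: "\<And>P. \<exists>X. \<forall>x. eps x X \<longleftrightarrow> P x"
    and prec_trans: "prec X Y \<Longrightarrow> prec Y Z \<Longrightarrow> prec X Z"
    and prec_coconnected: "\<not> ceq eps X Y \<longleftrightarrow> prec X Y \<or> prec Y X"
    and prec_minimal: "\<And>P X. P X \<Longrightarrow> \<exists>M. P M \<and> (\<forall>Y. P Y \<longrightarrow> \<not> prec Y M)"
begin

lemma ceq_prec_trans:
  assumes "ceq eps X X'" and "prec X' Y"
  shows "prec X Y"
proof -
  have "\<not> ceq eps X' Y"
    using assms(2) prec_coconnected[of X' Y] by blast
  then have "\<not> ceq eps X Y"
    using assms(1) by (auto simp: ceq_def)
  moreover have "\<not> prec Y X"
    using assms prec_trans prec_coconnected[of X X'] by blast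
  ultimately show ?thesis
    using prec_coconnected by blast
qed

lemma prec_ceq_trans:
  assumes "prec X Y" and "ceq eps Y Y'"
  shows "prec X Y'"
proof -
  have "\<not> ceq eps X Y"
    using assms(1) prec_coconnected[of X Y] by blast
  then have "\<not> ceq eps X Y'"
    using assms(2) by (auto simp: ceq_def)
  moreover have "\<not> prec Y' X"
    using assms prec_trans prec_coconnected[of Y Y'] by blast
  ultimately show ?thesis
    using prec_coconnected by blast
qed

definition singleton_class :: "'o \<Rightarrow> 'c" where
  "singleton_class a = (SOME S. \<forall>z. eps z S \<longleftrightarrow> z = a)"

lemma eps_singleton_class [simp]: "eps z (singleton_class a) \<longleftrightarrow> z = a"
  using someI_ex[OF comprehension[of "\<lambda>z. z = a"]] unfolding singleton_class_def by blast

lemma olt_iff_prec_singleton_class: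
  "olt eps prec a b \<longleftrightarrow> prec (singleton_class a) (singleton_class b)"
proof
  assume singletons: "prec (singleton_class a) (singleton_class b)"
  show "olt eps prec a b"
    unfolding olt_def
  proof (intro allI impI)
    fix X Y assume "\<forall>z. eps z X \<longleftrightarrow> z = a" and "\<forall>z. eps z Y \<longleftrightarrow> z = b"
    then have "ceq eps X (singleton_class a)" and "ceq eps (singleton_class b) Y"
      by (simp_all add: ceq_def)
    then show "prec X Y"
      using ceq_prec_trans prec_ceq_trans singletons by metis
  qed
qed (simp add: olt_def)

lemma olt_linear: "a \<noteq> b \<Longrightarrow> olt eps prec a b \<or> olt eps prec b a"
  using prec_coconnected[of "singleton_class a" "singleton_class b"]
  by (auto simp: olt_iff_prec_singleton_class ceq_def)

lemma wfp_prec: "wfp prec"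
  unfolding wfp_eq_minimal
proof (intro allI impI)
  fix Q :: "'c set" and X assume "X \<in> Q"
  then show "\<exists>M\<in>Q. \<forall>Y. prec Y M \<longrightarrow> Y \<notin> Q"
    using prec_minimal[of "\<lambda>X. X \<in> Q"] by blast
qed

lemma wfp_olt: "wfp (olt eps prec)"
proof -
  have "wfp (inv_imagep prec singleton_class)"
    using wfp_on_inv_imagep wfp_on_subset[OF wfp_prec] by blast
  then show ?thesis
    by (simp add: inv_imagep_def olt_iff_prec_singleton_class[abs_def])
qed

lemma olt_irrefl: "\<not> olt eps prec a a"
  using wfp_olt wfp_imp_irreflp irreflpD by metis

lemma bnd_if_strict_upper_bound:
  assumes "\<forall>y. eps y X \<longrightarrow> olt eps prec y u"
  shows "bnd eps prec X"
proof -
  obtain l where l: "\<forall>y. eps y X \<longrightarrow> olt eps prec y l"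
    and least: "\<And>l'. olt eps prec l' l \<Longrightarrow> \<not> (\<forall>y. eps y X \<longrightarrow> olt eps prec y l')"
    using wfp_olt[unfolded wfp_eq_minimal, rule_format,
        of u "{l. \<forall>y. eps y X \<longrightarrow> olt eps prec y l}"] assms by auto
  have "is_lim eps prec X l"
    unfolding is_lim_def using l least olt_linear by blast
  then show ?thesis
    unfolding bnd_def by blast
qed

definition initial_segment :: "'o \<Rightarrow> 'c" where
  "initial_segment z = (SOME S. \<forall>y. eps y S \<longleftrightarrow> olt eps prec y z)"

lemma eps_initial_segment [simp]: "eps y (initial_segment z) \<longleftrightarrow> olt eps prec y z"
  using someI_ex[OF comprehension[of "\<lambda>y. olt eps prec y z"]]
  unfolding initial_segment_def by blast

lemma is_lim_initial_segment: "is_lim eps prec (initial_segment z) z"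
  unfolding is_lim_def using olt_linear olt_irrefl by auto

end

locale cot = class_ordering eps prec for eps :: "'o \<Rightarrow> 'c \<Rightarrow> bool" and prec +
  fixes iota :: "'c \<Rightarrow> 'o option"
  assumes respective: "lim_le eps prec X y \<Longrightarrow> eps y Y \<Longrightarrow> prec X Y"
    and iota_defined: "bnd eps prec X \<Longrightarrow> iota X \<noteq> None"
    and iota_eq_Some_iff:
      "iota X = Some x \<longleftrightarrow> (\<forall>C. index_class eps prec iota X C \<longrightarrow> is_lim eps prec C x)"
begin

lemma iota_strict_mono:
  assumes "prec Y Z" and "iota Y = Some a" and "iota Z = Some b"
  shows "olt eps prec a b"
proof -
  obtain D where D: "\<forall>w. eps w D \<longleftrightarrow> (\<exists>V. prec V Z \<and> iota V = Some w)"
    using comprehension[of "\<lambda>w. \<exists>V. prec V Z \<and> iota V = Some w"] by blast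
  then have "index_class eps prec iota Z D"
    unfolding index_class_def by blast
  then have "is_lim eps prec D b"
    using iota_eq_Some_iff[THEN iffD1, OF assms(3)] by blast
  moreover have "eps a D"
    using D assms(1,2) by blast
  ultimately show ?thesis
    unfolding is_lim_def by blast
qed

lemma initial_segment_prec:
  assumes "eps y X" and "\<not> olt eps prec y z"
  shows "prec (initial_segment z) X"
proof -
  have "lim_le eps prec (initial_segment z) y"
    unfolding lim_le_def using is_lim_initial_segment olt_linear assms(2) by blast
  then show ?thesis
    using respective assms(1) by blast
qed

definition segment_index :: "'o \<Rightarrow> 'o" where
  "segment_index z = the (iota (initial_segment z))"

lemma iota_initial_segment: "iota (initial_segment z) = Some (segment_index z)"
proof -
  have "iota (initial_segment z) \<noteq> None"
    using iota_defined is_lim_initial_segment unfolding bnd_def by blast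
  then show ?thesis
    unfolding segment_index_def by auto
qed

lemma segment_index_strict_mono:
  "olt eps prec w z \<Longrightarrow> olt eps prec (segment_index w) (segment_index z)"
  using iota_strict_mono[OF initial_segment_prec iota_initial_segment iota_initial_segment]
  by (simp add: olt_irrefl)

lemma segment_index_not_less: "\<not> olt eps prec (segment_index z) z"
  using wfp_olt
proof (induction z rule: wfp_induct_rule)
  case (less z)
  show ?case
  proof
    assume less_z: "olt eps prec (segment_index z) z"
    then have "olt eps prec (segment_index (segment_index z)) (segment_index z)"
      by (rule segment_index_strict_mono)
    with less_z less.IH show False
      by blast
  qed
qed

theorem bnd_if_iota_eq_Some:
  assumes "iota X = Some x"
  shows "bnd eps prec X"
proof (rule ccontr)
  assume "\<not> bnd eps prec X"
  then obtain y where "eps y X" and "\<not> olt eps prec y x"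
    using bnd_if_strict_upper_bound[of X x] by blast
  then have "prec (initial_segment x) X"
    by (rule initial_segment_prec)
  then have "olt eps prec (segment_index x) x"
    by (rule iota_strict_mono[OF _ iota_initial_segment assms])
  with segment_index_not_less show False
    by blast
qed

end

lemma cot_if_COT: "COT eps prec iota \<Longrightarrow> cot eps prec iota"
  unfolding COT_def cot_def class_ordering_def cot_axioms_def
  by (intro conjI allI impI; metis)

theorem propositionI:
  fixes eps :: "'o \<Rightarrow> 'c \<Rightarrow> bool" and prec :: "'c \<Rightarrow> 'c \<Rightarrow> bool"
    and iota :: "'c \<Rightarrow> 'o option"
  assumes "COT eps prec iota"
  shows "\<forall>X x. iota X = Some x \<longrightarrow> bnd eps prec X"
  using cot.bnd_if_iota_eq_Some[OF cot_if_COT[OF assms]] by blast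

end
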